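(* For $s\in\mathbb R$, as $N\to\infty$, $$\chi^{\mathbb K}_N\big(N^{-1}(1-s(2N)^{-1/2})\big)\sim(2N)^{1/2}f_0(s).$$
   Context: $\chi^{\mathbb K}_N(z)=\sum_{m=0}^{N-1}z^m\prod_{j=1}^m(N-j)$ for $z\in\mathbb R$ is the susceptibility of self-avoiding walk on the complete graph on $N$ vertices (generating function of the number of $m$-step self-avoiding walks from a fixed vertex). $f_0(s)=\int_0^\infty xe^{-\frac14x^4-\frac12sx^2}dx$. *)

theory Defs
  imports "HOL-Analysis.Analysis" "HOL-Library.Landau_Symbols"
begin

text \<open>Susceptibility of self-avoiding walk on the complete graph on N vertices.\<close>
definition chiK :: "nat \<Rightarrow> real \<Rightarrow> real" where
  "chiK N z = (\<Sum>m<N. z ^ m * (\<Prod>j=1..m. real (N - j)))"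

definition f0 :: "real \<Rightarrow> real" where
  "f0 s = integral {0..} (\<lambda>x. x * exp (- (x ^ 4) / 4 - s * x ^ 2 / 2))"

end

theory Submission
  imports Defs "HOL-Real_Asymp.Real_Asymp"
begin

text \<open>Put a = sqrt (2 N). As there are (N-1)(N-2)...(N-m) walks of length m, at z = (1 - s/a)/N
  the susceptibility is the sum over m < N of T(m) = (1 - s/a)^m (1 - 1/N)(1 - 2/N)...(1 - m/N), and the
  substitution y = x^2/2 turns the sum of T(m)/a into the integral over [0, \<infinity>) of the step function
  x T(floor (a x^2/2)). For fixed x the index m ~ a x^2/2 makes (1 - s/a)^m tend to exp (- s x^2/2)
  and the product tend to exp (- x^4/4), since 1/N + ... + m/N ~ m^2/(2N) \<rightarrow> x^4/4. The
  inequality 1 - t \<le> exp (- t) also dominates all integrands by exp (C - x), so dominated convergence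
  gives chiK N z / a \<rightarrow> f0 s, and f0 s > 0.\<close>

lemma prod_one_minus_le_exp_neg_sum:
  fixes t :: "'a \<Rightarrow> real"
  assumes "\<And>i. i \<in> A \<Longrightarrow> t i \<le> 1"
  shows "(\<Prod>i\<in>A. 1 - t i) \<le> exp (- (\<Sum>i\<in>A. t i))"
proof (cases "finite A")
  case True
  have "(\<Prod>i\<in>A. 1 - t i) \<le> (\<Prod>i\<in>A. exp (- t i))"
    using assms exp_ge_add_one_self[of "- t _"] by (intro prod_mono) auto
  also have "\<dots> = exp (- (\<Sum>i\<in>A. t i))"
    using True by (simp add: exp_sum flip: sum_negf)
  finally show ?thesis .
qed simp

lemma exp_neg_sum_le_prod_one_minus:
  fixes t :: "'a \<Rightarrow> real"
  assumes "\<And>i. i \<in> A \<Longrightarrow> 0 \<le> t i \<and> t i \<le> 1/2"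
  shows "exp (- (\<Sum>i\<in>A. t i) - 2 * (\<Sum>i\<in>A. (t i)\<^sup>2)) \<le> (\<Prod>i\<in>A. 1 - t i)"
proof (cases "finite A")
  case True
  have "exp (- (\<Sum>i\<in>A. t i) - 2 * (\<Sum>i\<in>A. (t i)\<^sup>2)) = (\<Prod>i\<in>A. exp (- t i - 2 * (t i)\<^sup>2))"
    using True by (simp add: exp_sum [symmetric] sum_subtractf sum_negf sum_distrib_left)
  also have "\<dots> \<le> (\<Prod>i\<in>A. 1 - t i)"
  proof (rule prod_mono)
    fix i assume i: "i \<in> A"
    have "exp (- t i - 2 * (t i)\<^sup>2) \<le> exp (ln (1 - t i))"
      using ln_one_minus_pos_lower_bound[of "t i"] assms[OF i] by (simp only: exp_le_cancel_iff)
    also have "exp (ln (1 - t i)) = 1 - t i"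
      using assms[OF i] by simp
    finally show "0 \<le> exp (- t i - 2 * (t i)\<^sup>2) \<and> exp (- t i - 2 * (t i)\<^sup>2) \<le> 1 - t i"
      by simp
  qed
  finally show ?thesis .
qed simp

lemma gauss_sum_div:
  fixes x :: real
  shows "(\<Sum>j=1..m. real j / x) = real m * (real m + 1) / (2 * x)"
proof -
  have "(\<Sum>j=1..m. real j / x) = (\<Sum>j=1..m. real j) / x"
    by (rule sum_divide_distrib [symmetric])
  also have "(\<Sum>j=1..m. real j) = real m * (real m + 1) / 2"
    using double_gauss_sum_from_Suc_0[of m, where 'a = real] by simp
  finally show ?thesis
    by simp
qed

lemma prod_one_minus_div_le_exp:
  fixes m N :: nat
  assumes "m \<le> N"
  shows "(\<Prod>j=1..m. 1 - real j / real N) \<le> exp (- (real m * (real m + 1) / (2 * real N)))"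
proof -
  have "(\<Prod>j=1..m. 1 - real j / real N) \<le> exp (- (\<Sum>j=1..m. real j / real N))"
    using assms by (intro prod_one_minus_le_exp_neg_sum) (auto simp: divide_le_eq_1)
  then show ?thesis
    unfolding gauss_sum_div .
qed

lemma exp_le_prod_one_minus_div:
  fixes m N :: nat
  assumes "2 * m \<le> N"
  shows "exp (- (real m * (real m + 1) / (2 * real N)) - 2 * (real m ^ 3 / real N ^ 2))
    \<le> (\<Prod>j=1..m. 1 - real j / real N)"
proof -
  have "(\<Sum>j=1..m. (real j / real N)\<^sup>2) \<le> (\<Sum>j=1..m. (real m / real N)\<^sup>2)"
    by (intro sum_mono power_mono divide_right_mono) auto
  also have "\<dots> = real m ^ 3 / real N ^ 2"
    by (simp add: power_divide power2_eq_square power3_eq_cube)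
  finally have "exp (- (real m * (real m + 1) / (2 * real N)) - 2 * (real m ^ 3 / real N ^ 2))
      \<le> exp (- (\<Sum>j=1..m. real j / real N) - 2 * (\<Sum>j=1..m. (real j / real N)\<^sup>2))"
    unfolding gauss_sum_div by simp
  also have "\<dots> \<le> (\<Prod>j=1..m. 1 - real j / real N)"
    using assms by (intro exp_neg_sum_le_prod_one_minus) (auto simp: field_simps)
  finally show ?thesis .
qed

lemma nat_floor_mult_div_bounds:
  fixes a c :: real
  assumes "0 < a" "0 \<le> c"
  shows "real (nat \<lfloor>a * c\<rfloor>) / a \<le> c" "c - 1 / a < real (nat \<lfloor>a * c\<rfloor>) / a"
proof -
  have k: "real (nat \<lfloor>a * c\<rfloor>) = of_int \<lfloor>a * c\<rfloor>"
    using assms by simp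
  show "real (nat \<lfloor>a * c\<rfloor>) / a \<le> c"
    using assms of_int_floor_le[of "a * c"] unfolding k by (simp add: divide_le_eq mult.commute)
  have "c < (of_int \<lfloor>a * c\<rfloor> + 1) / a"
    using assms real_of_int_floor_add_one_gt[of "a * c"] by (simp add: pos_less_divide_eq mult.commute)
  then show "c - 1 / a < real (nat \<lfloor>a * c\<rfloor>) / a"
    unfolding k by (simp add: add_divide_distrib)
qed

lemma tendsto_nat_floor_mult_div:
  fixes a :: "'a \<Rightarrow> real" and c :: real
  assumes a: "filterlim a at_top F" and c: "0 \<le> c"
  shows "((\<lambda>n. real (nat \<lfloor>a n * c\<rfloor>) / a n) \<longlongrightarrow> c) F"
proof (rule tendsto_sandwich)
  have pos: "eventually (\<lambda>n. 0 < a n) F"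
    using a by (rule filterlim_at_top_dense[THEN iffD1, rule_format])
  show "eventually (\<lambda>n. c - 1 / a n \<le> real (nat \<lfloor>a n * c\<rfloor>) / a n) F"
    using pos by eventually_elim (use nat_floor_mult_div_bounds(2) c in \<open>auto intro: less_imp_le\<close>)
  show "eventually (\<lambda>n. real (nat \<lfloor>a n * c\<rfloor>) / a n \<le> c) F"
    using pos by eventually_elim (use nat_floor_mult_div_bounds(1) c in auto)
  show "((\<lambda>n. c - 1 / a n) \<longlongrightarrow> c) F"
    using tendsto_diff[OF tendsto_const tendsto_inverse_0_at_top[OF a], of c]
    by (simp add: inverse_eq_divide)
qed simp

lemma tendsto_one_plus_div_power:
  fixes a :: "'a \<Rightarrow> real" and m :: "'a \<Rightarrow> nat" and c y :: real
  assumes a: "filterlim a at_top F" and m: "((\<lambda>n. real (m n) / a n) \<longlongrightarrow> y) F"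
  shows "((\<lambda>n. (1 + c / a n) ^ m n) \<longlongrightarrow> exp (c * y)) F"
proof -
  have "((\<lambda>t. t * ln (1 + c / t)) \<longlongrightarrow> c) at_top"
    by real_asymp
  then have "((\<lambda>n. a n * ln (1 + c / a n)) \<longlongrightarrow> c) F"
    using a by (rule filterlim_compose)
  then have lim: "((\<lambda>n. exp (real (m n) / a n * (a n * ln (1 + c / a n)))) \<longlongrightarrow> exp (y * c)) F"
    by (intro tendsto_intros m)
  have "eventually (\<lambda>n. \<bar>c\<bar> < a n) F"
    using a by (rule filterlim_at_top_dense[THEN iffD1, rule_format])
  then have "eventually (\<lambda>n. exp (real (m n) / a n * (a n * ln (1 + c / a n))) = (1 + c / a n) ^ m n) F"
  proof eventually_elim
    case (elim n)
    then have "0 < 1 + c / a n"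
      by (simp add: field_simps abs_less_iff)
    then show ?case
      using elim by (simp add: exp_of_nat_mult)
  qed
  from Lim_transform_eventually[OF lim this] show ?thesis
    by (simp add: mult.commute)
qed

text \<open>In the variable y = x^2/2, for which x dx = dy, the step profile is the step function
  y \<mapsto> c (floor (a y)) on [0, n/a), so its integral is the Riemann sum (c 0 + ... + c (n-1)) / a.\<close>

definition step_profile :: "real \<Rightarrow> (nat \<Rightarrow> real) \<Rightarrow> nat \<Rightarrow> real \<Rightarrow> real" where
  "step_profile a c n x =
     (if 0 \<le> x \<and> nat \<lfloor>a * (x\<^sup>2 / 2)\<rfloor> < n then x * c (nat \<lfloor>a * (x\<^sup>2 / 2)\<rfloor>) else 0)"

lemma nat_floor_eq_on_sqrt_interval:
  fixes a x :: real
  assumes "0 < a" "sqrt (2 * real k / a) \<le> x" "x < sqrt (2 * real (Suc k) / a)"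
  shows "nat \<lfloor>a * (x\<^sup>2 / 2)\<rfloor> = k"
proof -
  have "0 \<le> sqrt (2 * real k / a)"
    using assms(1) by simp
  then have "0 \<le> x"
    using assms(2) by linarith
  then have "sqrt (2 * real k / a) \<le> sqrt (x\<^sup>2)" "sqrt (x\<^sup>2) < sqrt (2 * real (Suc k) / a)"
    using assms(2,3) by simp_all
  then have "2 * real k / a \<le> x\<^sup>2" "x\<^sup>2 < 2 * real (Suc k) / a"
    by (simp_all only: real_sqrt_le_iff real_sqrt_less_iff)
  then have "real k \<le> a * (x\<^sup>2 / 2)" "a * (x\<^sup>2 / 2) < real k + 1"
    using assms(1) by (simp_all add: field_simps)
  then have "\<lfloor>a * (x\<^sup>2 / 2)\<rfloor> = int k"
    by (intro floor_unique) auto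
  then show ?thesis
    by simp
qed

lemma has_integral_step_profile_Icc:
  assumes a: "0 < a" and "k \<le> n"
  shows "(step_profile a c n has_integral (\<Sum>m<k. c m) / a) {0..sqrt (2 * real k / a)}"
  using \<open>k \<le> n\<close>
proof (induction k)
  case 0
  show ?case
    using has_integral_refl(1)[of "step_profile a c n" 0] by simp
next
  case (Suc k)
  define u where "u = sqrt (2 * real k / a)"
  define v where "v = sqrt (2 * real (Suc k) / a)"
  have u: "0 \<le> u" "u \<le> v"
    unfolding u_def v_def using a by (auto intro!: divide_right_mono)
  have "((\<lambda>x. c k * x) has_integral c k * ((v\<^sup>2 - u\<^sup>2) / 2)) {u..v}"
    using ident_has_integral[OF u(2)] by (rule has_integral_mult_right)
  also have "c k * ((v\<^sup>2 - u\<^sup>2) / 2) = c k / a"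
    unfolding u_def v_def using a by (simp add: field_simps)
  finally have piece: "((\<lambda>x. c k * x) has_integral c k / a) {u..v}" .
  have "(step_profile a c n has_integral c k / a) {u..v}"
  proof (rule has_integral_spike_finite[OF _ _ piece, of "{v}"])
    fix x assume x: "x \<in> {u..v} - {v}"
    then have "nat \<lfloor>a * (x\<^sup>2 / 2)\<rfloor> = k"
      unfolding u_def v_def using a by (intro nat_floor_eq_on_sqrt_interval) auto
    then show "step_profile a c n x = c k * x"
      unfolding step_profile_def using x u Suc.prems by auto
  qed simp
  from has_integral_combine[OF u Suc.IH[folded u_def] this] Suc.prems
  show ?case
    unfolding v_def by (simp add: add_divide_distrib)
qed

lemma has_integral_step_profile:
  assumes a: "0 < a"
  shows "(step_profile a c n has_integral (\<Sum>m<n. c m) / a) {0..}"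
proof (rule has_integral_on_superset[OF has_integral_step_profile_Icc[OF a order.refl]])
  fix x assume x: "x \<notin> {0..sqrt (2 * real n / a)}"
  show "step_profile a c n x = 0"
  proof (cases "0 \<le> x")
    case True
    with x have "sqrt (2 * real n / a) < sqrt (x\<^sup>2)"
      by simp
    then have "2 * real n / a < x\<^sup>2"
      by (simp only: real_sqrt_less_iff)
    then have "real n \<le> a * (x\<^sup>2 / 2)"
      using a by (simp add: field_simps)
    then have "n \<le> nat \<lfloor>a * (x\<^sup>2 / 2)\<rfloor>"
      by linarith
    then show ?thesis
      unfolding step_profile_def by simp
  qed (simp add: step_profile_def)
qed auto

definition saw_term :: "real \<Rightarrow> nat \<Rightarrow> nat \<Rightarrow> real" where
  "saw_term s N m = (1 - s / sqrt (2 * real N)) ^ m * (\<Prod>j=1..m. 1 - real j / real N)"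

lemma chiK_eq_sum_saw_term:
  "chiK N ((1 - s * (2 * real N) powr (-1/2)) / real N) = (\<Sum>m<N. saw_term s N m)"
proof -
  have z: "(1 - s * (2 * real N) powr (-1/2)) / real N = (1 - s / sqrt (2 * real N)) / real N"
    by (simp add: powr_minus_divide powr_half_sqrt)
  have "((1 - s / sqrt (2 * real N)) / real N) ^ m * (\<Prod>j=1..m. real (N - j)) = saw_term s N m"
    if "m < N" for m
  proof -
    have "(\<Prod>j=1..m. 1 - real j / real N) = (\<Prod>j=1..m. real (N - j) / real N)"
      using that by (intro prod.cong) (auto simp: of_nat_diff field_simps)
    also have "\<dots> = (\<Prod>j=1..m. real (N - j)) / real N ^ m"
      by (simp add: prod_dividef)
    finally show ?thesis
      unfolding saw_term_def using that by (simp add: power_divide)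
  qed
  then show ?thesis
    unfolding chiK_def z by simp
qed

lemma tendsto_div_of_tendsto_div_sqrt:
  fixes m :: "nat \<Rightarrow> nat"
  assumes q: "(\<lambda>N. real (m N) / sqrt (2 * real N)) \<longlonglongrightarrow> y"
  shows "(\<lambda>N. real (m N) / real N) \<longlonglongrightarrow> 0"
proof -
  have "(\<lambda>N. real (m N) / sqrt (2 * real N) * (sqrt (2 * real N) / real N)) \<longlonglongrightarrow> y * 0"
    by (rule tendsto_mult[OF q]) real_asymp
  moreover have "eventually (\<lambda>N. real (m N) / sqrt (2 * real N) * (sqrt (2 * real N) / real N)
      = real (m N) / real N) sequentially"
    using eventually_gt_at_top[of 0] by eventually_elim simp
  ultimately show ?thesis
    by (simp add: Lim_transform_eventually)
qed

lemma tendsto_prod_one_minus_div: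
  fixes m :: "nat \<Rightarrow> nat"
  assumes "(\<lambda>N. real (m N) / sqrt (2 * real N)) \<longlonglongrightarrow> y"
  shows "(\<lambda>N. \<Prod>j=1..m N. 1 - real j / real N) \<longlonglongrightarrow> exp (- y\<^sup>2)"
proof -
  define q where "q N = real (m N) / sqrt (2 * real N)" for N
  define r where "r N = real (m N) / real N" for N
  have q: "q \<longlonglongrightarrow> y" and r: "r \<longlonglongrightarrow> 0"
    using assms tendsto_div_of_tendsto_div_sqrt[OF assms] unfolding q_def r_def .
  have moments: "real (m N) * (real (m N) + 1) / (2 * real N) = (q N)\<^sup>2 + r N / 2"
      "real (m N) ^ 3 / real N ^ 2 = 2 * (q N)\<^sup>2 * r N" if "0 < N" for N
    using that unfolding q_def r_def by (simp_all add: power_divide field_simps power2_eq_square power3_eq_cube)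
  have "eventually (\<lambda>N. r N < 1/2) sequentially"
    using r by (rule order_tendstoD) simp
  then have small: "eventually (\<lambda>N. 0 < N \<and> 2 * m N \<le> N) sequentially"
    using eventually_gt_at_top[of 0]
    by eventually_elim (auto simp: r_def field_simps)
  show ?thesis
  proof (rule tendsto_sandwich)
    show "eventually (\<lambda>N. exp (- ((q N)\<^sup>2 + r N / 2) - 2 * (2 * (q N)\<^sup>2 * r N))
        \<le> (\<Prod>j=1..m N. 1 - real j / real N)) sequentially"
      using small
    proof eventually_elim
      case (elim N)
      then show ?case
        using exp_le_prod_one_minus_div[of "m N" N] unfolding moments[OF conjunct1[OF elim]] by simp
    qed
    show "eventually (\<lambda>N. (\<Prod>j=1..m N. 1 - real j / real N) \<le> exp (- ((q N)\<^sup>2 + r N / 2)))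
        sequentially"
      using small
    proof eventually_elim
      case (elim N)
      then show ?case
        using prod_one_minus_div_le_exp[of "m N" N] unfolding moments(1)[OF conjunct1[OF elim]] by simp
    qed
    have "(\<lambda>N. exp (- ((q N)\<^sup>2 + r N / 2) - 2 * (2 * (q N)\<^sup>2 * r N)))
        \<longlonglongrightarrow> exp (- (y\<^sup>2 + 0 / 2) - 2 * (2 * y\<^sup>2 * 0))"
      by (intro tendsto_intros q r) auto
    then show "(\<lambda>N. exp (- ((q N)\<^sup>2 + r N / 2) - 2 * (2 * (q N)\<^sup>2 * r N))) \<longlonglongrightarrow> exp (- y\<^sup>2)"
      by simp
    have "(\<lambda>N. exp (- ((q N)\<^sup>2 + r N / 2))) \<longlonglongrightarrow> exp (- (y\<^sup>2 + 0 / 2))"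
      by (intro tendsto_intros q r) auto
    then show "(\<lambda>N. exp (- ((q N)\<^sup>2 + r N / 2))) \<longlonglongrightarrow> exp (- y\<^sup>2)"
      by simp
  qed
qed

lemma tendsto_saw_term:
  fixes m :: "nat \<Rightarrow> nat"
  assumes "(\<lambda>N. real (m N) / sqrt (2 * real N)) \<longlonglongrightarrow> y"
  shows "(\<lambda>N. saw_term s N (m N)) \<longlonglongrightarrow> exp (- s * y - y\<^sup>2)"
proof -
  have "filterlim (\<lambda>N. sqrt (2 * real N)) at_top sequentially"
    by real_asymp
  from tendsto_one_plus_div_power[OF this assms, of "- s"]
  have "(\<lambda>N. (1 - s / sqrt (2 * real N)) ^ m N) \<longlonglongrightarrow> exp (- s * y)"
    by simp
  from tendsto_mult[OF this tendsto_prod_one_minus_div[OF assms]]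
  show ?thesis
    unfolding saw_term_def by (simp add: exp_diff exp_minus divide_inverse)
qed

lemma abs_saw_term_le:
  assumes "m < N"
  shows "\<bar>saw_term s N m\<bar> \<le> exp (\<bar>s\<bar> * (real m / sqrt (2 * real N)) - (real m / sqrt (2 * real N))\<^sup>2)"
proof -
  define a where "a = sqrt (2 * real N)"
  have a: "0 < a"
    unfolding a_def using assms by simp
  have "\<bar>1 - s / a\<bar> \<le> 1 + \<bar>s / a\<bar>"
    by linarith
  also have "\<dots> \<le> exp (\<bar>s\<bar> / a)"
    using exp_ge_add_one_self[of "\<bar>s / a\<bar>"] a by simp
  finally have "\<bar>1 - s / a\<bar> ^ m \<le> exp (\<bar>s\<bar> / a) ^ m"
    by (rule power_mono) simp
  then have power_le: "\<bar>(1 - s / a) ^ m\<bar> \<le> exp (\<bar>s\<bar> * (real m / a))"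
    by (simp add: power_abs exp_of_nat_mult [symmetric] mult.commute)
  have prod_nonneg: "0 \<le> (\<Prod>j=1..m. 1 - real j / real N)"
    using assms by (intro prod_nonneg) simp
  have "(\<Prod>j=1..m. 1 - real j / real N) \<le> exp (- (real m * (real m + 1) / (2 * real N)))"
    using assms by (intro prod_one_minus_div_le_exp) simp
  also have "\<dots> \<le> exp (- (real m / a)\<^sup>2)"
    unfolding a_def by (simp add: power_divide power2_eq_square divide_right_mono mult_left_mono)
  finally have "\<bar>(1 - s / a) ^ m\<bar> * \<bar>\<Prod>j=1..m. 1 - real j / real N\<bar>
      \<le> exp (\<bar>s\<bar> * (real m / a)) * exp (- (real m / a)\<^sup>2)"
    unfolding abs_of_nonneg[OF prod_nonneg] using power_le prod_nonneg by (intro mult_mono) auto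
  then show ?thesis
    unfolding saw_term_def a_def abs_mult by (simp add: mult_exp_exp)
qed

definition saw_profile :: "real \<Rightarrow> nat \<Rightarrow> real \<Rightarrow> real" where
  "saw_profile s N = step_profile (sqrt (2 * real N)) (saw_term s N) N"

lemma tendsto_saw_profile:
  assumes x: "0 \<le> x"
  shows "(\<lambda>N. saw_profile s N x) \<longlonglongrightarrow> x * exp (- (x ^ 4) / 4 - s * x\<^sup>2 / 2)"
proof -
  define m where "m N = nat \<lfloor>sqrt (2 * real N) * (x\<^sup>2 / 2)\<rfloor>" for N
  have "filterlim (\<lambda>N. sqrt (2 * real N)) at_top sequentially"
    by real_asymp
  then have q: "(\<lambda>N. real (m N) / sqrt (2 * real N)) \<longlonglongrightarrow> x\<^sup>2 / 2"
    unfolding m_def by (rule tendsto_nat_floor_mult_div) simp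
  have "eventually (\<lambda>N. real (m N) / real N < 1) sequentially"
    using tendsto_div_of_tendsto_div_sqrt[OF q] by (rule order_tendstoD) simp
  then have eq: "eventually (\<lambda>N. x * saw_term s N (m N) = saw_profile s N x) sequentially"
    using eventually_gt_at_top[of 0]
  proof eventually_elim
    case (elim N)
    then have "m N < N"
      by (simp add: divide_less_eq)
    then show ?case
      unfolding saw_profile_def step_profile_def m_def using x by simp
  qed
  have exponent: "- s * (x\<^sup>2 / 2) - (x\<^sup>2 / 2)\<^sup>2 = - (x ^ 4) / 4 - s * x\<^sup>2 / 2"
    by (simp add: power2_eq_square power4_eq_xxxx field_simps)
  have "(\<lambda>N. x * saw_term s N (m N)) \<longlonglongrightarrow> x * exp (- (x ^ 4) / 4 - s * x\<^sup>2 / 2)"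
    using tendsto_mult[OF tendsto_const tendsto_saw_term[OF q], of x s] unfolding exponent .
  then show ?thesis
    using eq by (rule Lim_transform_eventually)
qed

lemma quartic_exponent_le_linear:
  fixes q s x :: real
  assumes "0 \<le> q" "q \<le> x\<^sup>2 / 2" "x\<^sup>2 / 2 - 1 \<le> q"
  shows "x + (\<bar>s\<bar> * q - q\<^sup>2) \<le> (\<bar>s\<bar> + 3)\<^sup>2 / 4 + 2 - x"
proof -
  define y where "y = x\<^sup>2 / 2"
  have "y\<^sup>2 - 2 * y \<le> q\<^sup>2"
  proof (cases "y \<le> 2")
    case True
    with assms have "y * (y - 2) \<le> 0"
      unfolding y_def by (intro mult_nonneg_nonpos) auto
    moreover have "0 \<le> q * q"
      by simp
    ultimately show ?thesis
      unfolding power2_eq_square right_diff_distrib by linarith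
  next
    case False
    then have "(y - 1)\<^sup>2 \<le> q\<^sup>2"
      using assms unfolding y_def by (intro power_mono) auto
    then show ?thesis
      by (simp add: power2_eq_square algebra_simps)
  qed
  moreover have "\<bar>s\<bar> * q \<le> \<bar>s\<bar> * y"
    using assms unfolding y_def by (intro mult_left_mono) auto
  moreover have "2 * x \<le> y + 2"
    using sum_squares_ge_zero[of "x - 2" 0] unfolding y_def by (simp add: power2_eq_square algebra_simps)
  moreover have "(\<bar>s\<bar> + 3) * y - y\<^sup>2 \<le> (\<bar>s\<bar> + 3)\<^sup>2 / 4"
    using sum_squares_ge_zero[of "y - (\<bar>s\<bar> + 3) / 2" 0] by (simp add: power2_eq_square field_simps)
  ultimately show ?thesis
    by (simp add: algebra_simps)
qed

lemma abs_saw_profile_le: "\<bar>saw_profile s N x\<bar> \<le> exp ((\<bar>s\<bar> + 3)\<^sup>2 / 4 + 2 - x)"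
proof (cases "0 \<le> x \<and> nat \<lfloor>sqrt (2 * real N) * (x\<^sup>2 / 2)\<rfloor> < N")
  case False
  then show ?thesis
    unfolding saw_profile_def step_profile_def by auto
next
  case True
  define a where "a = sqrt (2 * real N)"
  define m where "m = nat \<lfloor>a * (x\<^sup>2 / 2)\<rfloor>"
  define q where "q = real m / a"
  have m: "m < N"
    using True unfolding m_def a_def by auto
  have a: "1 \<le> a"
    unfolding a_def using m by simp
  have "q \<le> x\<^sup>2 / 2" "x\<^sup>2 / 2 - 1 / a < q"
    using nat_floor_mult_div_bounds[of a "x\<^sup>2 / 2"] a unfolding q_def m_def by auto
  moreover have "1 / a \<le> 1" "0 \<le> q"
    unfolding q_def using a by simp_all
  ultimately have "x + (\<bar>s\<bar> * q - q\<^sup>2) \<le> (\<bar>s\<bar> + 3)\<^sup>2 / 4 + 2 - x"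
    by (intro quartic_exponent_le_linear) auto
  then have exponent: "exp (x + (\<bar>s\<bar> * q - q\<^sup>2)) \<le> exp ((\<bar>s\<bar> + 3)\<^sup>2 / 4 + 2 - x)"
    by simp
  have "\<bar>saw_profile s N x\<bar> = x * \<bar>saw_term s N m\<bar>"
    unfolding saw_profile_def step_profile_def m_def a_def using True by (simp add: abs_mult)
  also have "\<dots> \<le> exp x * exp (\<bar>s\<bar> * q - q\<^sup>2)"
  proof (rule mult_mono)
    show "x \<le> exp x"
      using exp_ge_add_one_self[of x] by linarith
    show "\<bar>saw_term s N m\<bar> \<le> exp (\<bar>s\<bar> * q - q\<^sup>2)"
      using abs_saw_term_le[OF m, of s] unfolding q_def a_def .
  qed simp_all
  also have "\<dots> \<le> exp ((\<bar>s\<bar> + 3)\<^sup>2 / 4 + 2 - x)"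
    using exponent by (simp add: mult_exp_exp)
  finally show ?thesis .
qed

lemma integral_saw_profile_tendsto:
  shows "(\<lambda>x. x * exp (- (x ^ 4) / 4 - s * x\<^sup>2 / 2)) integrable_on {0..}"
    and "(\<lambda>N. integral {0..} (saw_profile s N)) \<longlonglongrightarrow> f0 s"
proof -
  have integrable: "saw_profile s N integrable_on {0..}" for N
  proof (cases "N = 0")
    case True
    then have "saw_profile s N = (\<lambda>x. 0)"
      by (simp add: saw_profile_def step_profile_def fun_eq_iff)
    then show ?thesis
      by (simp add: integrable_0)
  next
    case False
    then show ?thesis
      unfolding saw_profile_def by (intro has_integral_integrable[OF has_integral_step_profile]) simp
  qed
  have "exp ((\<bar>s\<bar> + 3)\<^sup>2 / 4 + 2 - x) = exp ((\<bar>s\<bar> + 3)\<^sup>2 / 4 + 2) * exp (- 1 * x)" for x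
    by (simp add: mult_exp_exp)
  then have dominant: "(\<lambda>x. exp ((\<bar>s\<bar> + 3)\<^sup>2 / 4 + 2 - x)) integrable_on {0..}"
    using integrable_on_exp_minus_to_infinity[of 1 0] by (simp add: integrable_on_cmult_iff)
  have bound: "norm (saw_profile s N x) \<le> exp ((\<bar>s\<bar> + 3)\<^sup>2 / 4 + 2 - x)" for N x
    using abs_saw_profile_le by simp
  have limit: "(\<lambda>N. saw_profile s N x) \<longlonglongrightarrow> x * exp (- (x ^ 4) / 4 - s * x\<^sup>2 / 2)"
    if "x \<in> {0..}" for x
    using that by (intro tendsto_saw_profile) simp
  show "(\<lambda>x. x * exp (- (x ^ 4) / 4 - s * x\<^sup>2 / 2)) integrable_on {0..}"
    by (rule dominated_convergence(1)[OF integrable dominant bound limit])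
  show "(\<lambda>N. integral {0..} (saw_profile s N)) \<longlonglongrightarrow> f0 s"
    unfolding f0_def by (rule dominated_convergence(2)[OF integrable dominant bound limit])
qed

lemma f0_pos: "0 < f0 s"
proof -
  define g where "g x = x * exp (- (x ^ 4) / 4 - s * x\<^sup>2 / 2)" for x
  define c where "c = exp (- 1/4 - \<bar>s\<bar> / 2)"
  have linear: "((\<lambda>x. c * x) has_integral c / 2) {0..1}"
    using has_integral_mult_right[OF ident_has_integral[of 0 1], of c] by simp
  have "g integrable_on {0..1}"
    unfolding g_def by (intro integrable_continuous_interval continuous_intros) auto
  moreover have "c * x \<le> g x" if "x \<in> {0..1}" for x
  proof -
    have "x ^ 4 \<le> 1" "x\<^sup>2 \<le> 1"
      using that by (auto intro: power_le_one)
    then have "s * x\<^sup>2 \<le> \<bar>s\<bar>"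
      by (metis abs_ge_self abs_mult abs_of_nonneg mult_left_le order_trans zero_le_power2 abs_ge_zero)
    then have "c \<le> exp (- (x ^ 4) / 4 - s * x\<^sup>2 / 2)"
      unfolding c_def using \<open>x ^ 4 \<le> 1\<close> by simp
    then show ?thesis
      unfolding g_def using that by (metis atLeastAtMost_iff mult.commute mult_left_mono)
  qed
  ultimately have "c / 2 \<le> integral {0..1} g"
    using has_integral_le[OF linear integrable_integral] by blast
  also have "integral {0..1} g \<le> f0 s"
    unfolding f0_def g_def[symmetric]
    using \<open>g integrable_on {0..1}\<close> integral_saw_profile_tendsto(1)[of s]
    by (intro integral_subset_le) (auto simp: g_def [abs_def])
  finally have "c / 2 \<le> f0 s" .
  moreover have "0 < c"
    unfolding c_def by simp
  ultimately show ?thesis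
    by linarith
qed

theorem proposition1p5:
  fixes s :: real
  shows "(\<lambda>N::nat. chiK N ((1 - s * (2 * real N) powr (-1/2)) / real N))
           \<sim>[at_top] (\<lambda>N. (2 * real N) powr (1/2) * f0 s)"
proof -
  have "eventually (\<lambda>N. integral {0..} (saw_profile s N)
      = chiK N ((1 - s * (2 * real N) powr (-1/2)) / real N) / (2 * real N) powr (1/2)) at_top"
    using eventually_gt_at_top[of 0]
  proof eventually_elim
    case (elim N)
    have "(saw_profile s N has_integral (\<Sum>m<N. saw_term s N m) / sqrt (2 * real N)) {0..}"
      unfolding saw_profile_def using elim by (intro has_integral_step_profile) simp
    then show ?case
      unfolding chiK_eq_sum_saw_term by (simp add: integral_unique powr_half_sqrt)
  qed
  with integral_saw_profile_tendsto(2)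
  have "((\<lambda>N. chiK N ((1 - s * (2 * real N) powr (-1/2)) / real N) / (2 * real N) powr (1/2))
      \<longlongrightarrow> f0 s) at_top"
    by (rule Lim_transform_eventually)
  from asymp_equivI'_const[OF this] f0_pos[of s]
  show ?thesis
    by (simp add: mult.commute)
qed

end
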